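(* Let $S$ be a semigroup, let $a\in S$, and define $$P=\{x\in Sa: x\,\mathscr L\, ax\},\quad P'=\{x\in Sa: x\,\mathscr J\, ax\},\quad P''=\{x\in S: x\in xSa\},\quad P'''=\{x\in S: x\in S^1xSa\}.$$ For $x\in Sa$, write $K_x$ for the $\mathscr K$-class of $x$ in $S$ and $K^a_x$ for the $\mathscr K$-class of $x$ in the semigroup $Sa$, for $\mathscr K\in\{\mathscr L,\mathscr R,\mathscr H,\mathscr D,\mathscr J\}$. Then for every $x\in Sa$: (i) $L^a_x=L_x\cap P$ if $x\in P$, and $L^a_x=\{x\}$ if $x\notin P$; (ii) $R^a_x=R_x\cap P''$ if $x\in P''$, and $R^a_x=\{x\}$ if $x\notin P''$; (iii) $H^a_x=H_x$ if $x\in P\cap P''$, and $H^a_x=\{x\}$ if $x\notin P\cap P''$; (iv) $D^a_x=D_x\cap P\cap P''$ if $x\in P\cap P''$; $D^a_x=R^a_x$ if $x\notin P$; and $D^a_x=L^a_x$ if $x\notin P''$; (v) $J^a_x=J_x\cap P'\cap P'''$ if $x\in P'\cap P'''$, and $J^a_x=D^a_x$ if $x\notin P'\cap P'''$.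
   Context: $Sa=\{xa:x\in S\}$. $S^1$ denotes $S$ with an identity adjoined if $S$ is not a monoid. Green's relations on a semigroup $T$: $x\,\mathscr L\,y$ iff $T^1x=T^1y$; $x\,\mathscr R\,y$ iff $xT^1=yT^1$; $x\,\mathscr J\,y$ iff $T^1xT^1=T^1yT^1$; $\mathscr H=\mathscr L\cap\mathscr R$; $\mathscr D=\mathscr L\vee\mathscr R=\mathscr L\circ\mathscr R$. The relations on $S$ and on $Sa$ are computed in the respective semigroups. *)

theory Defs
  imports Main
begin

text \<open>The semigroup S is the ambient type 'a (class semigroup_mult).
 Green's relations are computed in a subsemigroup T of S (T = UNIV for S itself).
 For T we have T^1 x = {x} \<union> T x, etc.\<close>

definition Sa :: "'a::semigroup_mult \<Rightarrow> 'a set" where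
  "Sa a = {s * a | s. True}"

definition lprin :: "'a::semigroup_mult set \<Rightarrow> 'a \<Rightarrow> 'a set" where
  "lprin T x = insert x {t * x | t. t \<in> T}"

definition rprin :: "'a::semigroup_mult set \<Rightarrow> 'a \<Rightarrow> 'a set" where
  "rprin T x = insert x {x * t | t. t \<in> T}"

definition jprin :: "'a::semigroup_mult set \<Rightarrow> 'a \<Rightarrow> 'a set" where
  "jprin T x = insert x ({t * x | t. t \<in> T} \<union> {x * t | t. t \<in> T}
                         \<union> {s * x * t | s t. s \<in> T \<and> t \<in> T})"

definition greenL :: "'a::semigroup_mult set \<Rightarrow> 'a \<Rightarrow> 'a \<Rightarrow> bool" where
  "greenL T x y \<longleftrightarrow> lprin T x = lprin T y"

definition greenR :: "'a::semigroup_mult set \<Rightarrow> 'a \<Rightarrow> 'a \<Rightarrow> bool" where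
  "greenR T x y \<longleftrightarrow> rprin T x = rprin T y"

definition greenJ :: "'a::semigroup_mult set \<Rightarrow> 'a \<Rightarrow> 'a \<Rightarrow> bool" where
  "greenJ T x y \<longleftrightarrow> jprin T x = jprin T y"

definition greenH :: "'a::semigroup_mult set \<Rightarrow> 'a \<Rightarrow> 'a \<Rightarrow> bool" where
  "greenH T x y \<longleftrightarrow> greenL T x y \<and> greenR T x y"

definition greenD :: "'a::semigroup_mult set \<Rightarrow> 'a \<Rightarrow> 'a \<Rightarrow> bool" where
  "greenD T x y \<longleftrightarrow> (\<exists>z\<in>T. greenL T x z \<and> greenR T z y)"

definition gclass :: "('a set \<Rightarrow> 'a \<Rightarrow> 'a \<Rightarrow> bool) \<Rightarrow> 'a set \<Rightarrow> 'a \<Rightarrow> 'a set" where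
  "gclass K T x = {y \<in> T. K T x y}"

text \<open>The sets P, P', P'', P''' of the theorem.\<close>
definition P1 :: "'a::semigroup_mult \<Rightarrow> 'a set" where
  "P1 a = {x \<in> Sa a. greenL UNIV x (a * x)}"

definition P2 :: "'a::semigroup_mult \<Rightarrow> 'a set" where
  "P2 a = {x \<in> Sa a. greenJ UNIV x (a * x)}"

definition P3 :: "'a::semigroup_mult \<Rightarrow> 'a set" where
  "P3 a = {x. \<exists>s. x = x * s * a}"

definition P4 :: "'a::semigroup_mult \<Rightarrow> 'a set" where
  "P4 a = {x. (\<exists>s. x = x * s * a) \<or> (\<exists>u s. x = u * x * s * a)}"

end

theory Submission
  imports Defs
begin

text \<open>A left multiplier from \<open>Sa\<close> has the form \<open>s a\<close>, so two distinct \<open>\<L>\<close>-related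
elements \<open>x, y\<close> of \<open>Sa\<close> satisfy \<open>x = s a t a x\<close>, which puts \<open>x \<L> ax\<close> in \<open>S\<close>.
Conversely, if \<open>y = v a y\<close> then every relation \<open>x = u y\<close> in \<open>S\<close> can be rewritten as
\<open>x = (u v) a y\<close>, a relation in \<open>Sa\<close>. Dually, right multipliers from \<open>Sa\<close> force
\<open>x \<in> x S a\<close>. Two-sided relations lift in the same way for elements of \<open>Sa x Sa\<close>, which within
\<open>Sa\<close> is exactly \<open>P' \<inter> P''' = P2 a \<inter> P4 a\<close>; an element outside it can only be \<open>\<J>\<close>-related in \<open>Sa\<close>
to elements that are already \<open>\<L>\<close>- or \<open>\<R>\<close>-related to it, so its \<open>\<J>\<close>-class is its
\<open>\<D>\<close>-class.\<close>

definition subsemigroup :: "'a::semigroup_mult set \<Rightarrow> bool" where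
  "subsemigroup T \<longleftrightarrow> (\<forall>s\<in>T. \<forall>t\<in>T. s * t \<in> T)"

lemma subsemigroup_UNIV: "subsemigroup UNIV"
  by (simp add: subsemigroup_def)

lemma Sa_iff: "z \<in> Sa a \<longleftrightarrow> (\<exists>s. z = s * a)"
  by (simp add: Sa_def)

lemma subsemigroup_Sa: "subsemigroup (Sa a)"
  unfolding subsemigroup_def Sa_def by (auto, metis mult.assoc)

lemma lprin_iff: "z \<in> lprin T x \<longleftrightarrow> z = x \<or> (\<exists>t\<in>T. z = t * x)"
  by (auto simp: lprin_def)

lemma rprin_iff: "z \<in> rprin T x \<longleftrightarrow> z = x \<or> (\<exists>t\<in>T. z = x * t)"
  by (auto simp: rprin_def)

lemma jprin_iff:
  "z \<in> jprin T x \<longleftrightarrow>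
     z = x \<or> (\<exists>t\<in>T. z = t * x) \<or> (\<exists>t\<in>T. z = x * t) \<or> (\<exists>s\<in>T. \<exists>t\<in>T. z = s * x * t)"
  by (auto simp: jprin_def)

lemma lprin_subset_jprin: "lprin T x \<subseteq> jprin T x"
  unfolding lprin_def jprin_def by blast

lemma rprin_subset_jprin: "rprin T x \<subseteq> jprin T x"
  unfolding rprin_def jprin_def by blast

lemma lprin_mono: "T \<subseteq> T' \<Longrightarrow> lprin T x \<subseteq> lprin T' x"
  unfolding lprin_def by blast

lemma rprin_mono: "T \<subseteq> T' \<Longrightarrow> rprin T x \<subseteq> rprin T' x"
  unfolding rprin_def by blast

lemma jprin_mono: "T \<subseteq> T' \<Longrightarrow> jprin T x \<subseteq> jprin T' x"
  unfolding jprin_def by blast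

lemma lprin_trans:
  "subsemigroup T \<Longrightarrow> z \<in> lprin T y \<Longrightarrow> y \<in> lprin T x \<Longrightarrow> z \<in> lprin T x"
  unfolding lprin_iff subsemigroup_def by (auto, metis mult.assoc)

lemma rprin_trans:
  "subsemigroup T \<Longrightarrow> z \<in> rprin T y \<Longrightarrow> y \<in> rprin T x \<Longrightarrow> z \<in> rprin T x"
  unfolding rprin_iff subsemigroup_def by (auto, metis mult.assoc)

lemma jprin_trans:
  "subsemigroup T \<Longrightarrow> z \<in> jprin T y \<Longrightarrow> y \<in> jprin T x \<Longrightarrow> z \<in> jprin T x"
  unfolding jprin_iff subsemigroup_def by (elim disjE bexE; metis mult.assoc)

lemma greenL_iff:
  "subsemigroup T \<Longrightarrow> greenL T x y \<longleftrightarrow> x \<in> lprin T y \<and> y \<in> lprin T x"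
  unfolding greenL_def by (metis lprin_trans lprin_iff subsetI subset_antisym)

lemma greenR_iff:
  "subsemigroup T \<Longrightarrow> greenR T x y \<longleftrightarrow> x \<in> rprin T y \<and> y \<in> rprin T x"
  unfolding greenR_def by (metis rprin_trans rprin_iff subsetI subset_antisym)

lemma greenJ_iff:
  "subsemigroup T \<Longrightarrow> greenJ T x y \<longleftrightarrow> x \<in> jprin T y \<and> y \<in> jprin T x"
  unfolding greenJ_def by (metis jprin_trans jprin_iff subsetI subset_antisym)

lemma greenL_refl: "greenL T x x" and greenR_refl: "greenR T x x"
  by (simp_all add: greenL_def greenR_def)

lemma greenL_sym: "greenL T x y \<Longrightarrow> greenL T y x"
  and greenR_sym: "greenR T x y \<Longrightarrow> greenR T y x"
  by (simp_all add: greenL_def greenR_def)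

lemma greenL_mono:
  "subsemigroup T \<Longrightarrow> subsemigroup T' \<Longrightarrow> T \<subseteq> T' \<Longrightarrow> greenL T x y \<Longrightarrow> greenL T' x y"
  by (meson greenL_iff lprin_mono subsetD)

lemma greenR_mono:
  "subsemigroup T \<Longrightarrow> subsemigroup T' \<Longrightarrow> T \<subseteq> T' \<Longrightarrow> greenR T x y \<Longrightarrow> greenR T' x y"
  by (meson greenR_iff rprin_mono subsetD)

lemma greenJ_mono:
  "subsemigroup T \<Longrightarrow> subsemigroup T' \<Longrightarrow> T \<subseteq> T' \<Longrightarrow> greenJ T x y \<Longrightarrow> greenJ T' x y"
  by (meson greenJ_iff jprin_mono subsetD)

lemma greenJ_if_greenD:
  assumes T: "subsemigroup T" and "greenD T x y" shows "greenJ T x y"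
proof -
  from assms(2) obtain z where "greenL T x z" "greenR T z y" by (auto simp: greenD_def)
  then have "x \<in> jprin T z" "z \<in> jprin T x" "z \<in> jprin T y" "y \<in> jprin T z"
    using lprin_subset_jprin[of T] rprin_subset_jprin[of T]
    by (auto simp: greenL_iff[OF T] greenR_iff[OF T])
  then show ?thesis
    by (auto simp: greenJ_iff[OF T] intro: jprin_trans[OF T])
qed

lemma gclass_iff: "y \<in> gclass K T x \<longleftrightarrow> y \<in> T \<and> K T x y"
  by (simp add: gclass_def)

lemma gclass_greenH: "gclass greenH T x = gclass greenL T x \<inter> gclass greenR T x"
  by (auto simp: gclass_iff greenH_def)

lemma gclass_eq_singleton:
  "x \<in> T \<Longrightarrow> K T x x \<Longrightarrow> (\<And>y. K T x y \<Longrightarrow> y = x) \<Longrightarrow> gclass K T x = {x}"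
  by (auto simp: gclass_iff)

lemmas greenL_Sa_iff = greenL_iff[OF subsemigroup_Sa]
  and greenR_Sa_iff = greenR_iff[OF subsemigroup_Sa]
  and greenJ_Sa_iff = greenJ_iff[OF subsemigroup_Sa]
  and greenL_UNIV_iff = greenL_iff[OF subsemigroup_UNIV]
  and greenR_UNIV_iff = greenR_iff[OF subsemigroup_UNIV]
  and greenJ_UNIV_iff = greenJ_iff[OF subsemigroup_UNIV]

lemmas greenL_UNIV_if_greenL_Sa = greenL_mono[OF subsemigroup_Sa subsemigroup_UNIV subset_UNIV]
  and greenR_UNIV_if_greenR_Sa = greenR_mono[OF subsemigroup_Sa subsemigroup_UNIV subset_UNIV]
  and greenJ_UNIV_if_greenJ_Sa = greenJ_mono[OF subsemigroup_Sa subsemigroup_UNIV subset_UNIV]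

lemma bex_Sa_iff: "(\<exists>t\<in>Sa a. P t) \<longleftrightarrow> (\<exists>s. P (s * a))"
  unfolding Sa_def by blast

lemma lprin_Sa_iff: "z \<in> lprin (Sa a) x \<longleftrightarrow> z = x \<or> (\<exists>s. z = s * a * x)"
  unfolding lprin_iff bex_Sa_iff ..

lemma rprin_Sa_iff: "z \<in> rprin (Sa a) x \<longleftrightarrow> z = x \<or> (\<exists>s. z = x * s * a)"
  unfolding rprin_iff bex_Sa_iff by (simp add: mult.assoc)

lemma jprin_Sa_iff:
  "z \<in> jprin (Sa a) x \<longleftrightarrow>
     z = x \<or> (\<exists>s. z = s * a * x) \<or> (\<exists>s. z = x * s * a) \<or> (\<exists>s t. z = s * a * x * t * a)"
  unfolding jprin_iff bex_Sa_iff by (simp add: mult.assoc)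

lemma lprin_UNIV_iff: "z \<in> lprin UNIV x \<longleftrightarrow> z = x \<or> (\<exists>s. z = s * x)"
  by (simp add: lprin_iff)

lemma rprin_UNIV_iff: "z \<in> rprin UNIV x \<longleftrightarrow> z = x \<or> (\<exists>s. z = x * s)"
  by (simp add: rprin_iff)

lemma jprin_UNIV_iff:
  "z \<in> jprin UNIV x \<longleftrightarrow> z = x \<or> (\<exists>s. z = s * x) \<or> (\<exists>s. z = x * s) \<or> (\<exists>s t. z = s * x * t)"
  by (simp add: jprin_iff)

lemma P1_subset_Sa: "P1 a \<subseteq> Sa a"
  by (auto simp: P1_def)

lemma P2_subset_Sa: "P2 a \<subseteq> Sa a"
  by (auto simp: P2_def)

lemma P3_subset_Sa: "P3 a \<subseteq> Sa a"
  by (auto simp: P3_def Sa_iff)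

lemma P1_iff: "x \<in> P1 a \<longleftrightarrow> x \<in> Sa a \<and> x \<in> lprin UNIV (a * x)"
  by (auto simp: P1_def greenL_UNIV_iff lprin_UNIV_iff)

lemma P2_iff: "x \<in> P2 a \<longleftrightarrow> x \<in> Sa a \<and> x \<in> jprin UNIV (a * x)"
  by (auto simp: P2_def greenJ_UNIV_iff jprin_UNIV_iff)

lemma P1_if_greenL_Sa:
  assumes "greenL (Sa a) x y" "x \<noteq> y" "x \<in> Sa a" shows "x \<in> P1 a"
proof -
  from assms(1,2) obtain s t where "x = s * a * y" "y = t * a * x"
    unfolding greenL_Sa_iff lprin_Sa_iff by metis
  then have "x = (s * a * t) * (a * x)" by (simp add: mult.assoc)
  with assms(3) show ?thesis unfolding P1_iff lprin_UNIV_iff by blast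
qed

lemma lprin_Sa_if_P1:
  assumes "x \<in> lprin UNIV y" "y \<in> P1 a" shows "x \<in> lprin (Sa a) y"
proof -
  have "y \<in> lprin UNIV (a * y)" using assms(2) by (simp add: P1_iff)
  with assms(1) show ?thesis unfolding lprin_UNIV_iff lprin_Sa_iff
    by (elim disjE exE; metis mult.assoc)
qed

lemma greenL_Sa_if_P1:
  "greenL UNIV x y \<Longrightarrow> x \<in> P1 a \<Longrightarrow> y \<in> P1 a \<Longrightarrow> greenL (Sa a) x y"
  by (simp add: greenL_Sa_iff greenL_UNIV_iff lprin_Sa_if_P1)

lemma P3_if_greenR_Sa:
  assumes "greenR (Sa a) x y" "x \<noteq> y" shows "x \<in> P3 a"
proof -
  from assms obtain s t where "x = y * s * a" "y = x * t * a"
    unfolding greenR_Sa_iff rprin_Sa_iff by metis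
  then have "x = x * (t * a * s) * a" by (simp add: mult.assoc)
  then show ?thesis unfolding P3_def by blast
qed

lemma rprin_Sa_if_P3:
  assumes "x \<in> rprin UNIV y" "x \<in> P3 a" shows "x \<in> rprin (Sa a) y"
proof -
  from assms(2) obtain s where "x = x * s * a" unfolding P3_def by blast
  with assms(1) show ?thesis unfolding rprin_UNIV_iff rprin_Sa_iff
    by (elim disjE exE; metis mult.assoc)
qed

lemma greenR_Sa_if_P3:
  "greenR UNIV x y \<Longrightarrow> x \<in> P3 a \<Longrightarrow> y \<in> P3 a \<Longrightarrow> greenR (Sa a) x y"
  by (simp add: greenR_Sa_iff greenR_UNIV_iff rprin_Sa_if_P3)

lemma P3_if_lprin:
  assumes "y \<in> lprin UNIV x" "x \<in> P3 a" shows "y \<in> P3 a"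
proof -
  from assms(2) obtain s where "x = x * s * a" unfolding P3_def by blast
  with assms(1) show ?thesis unfolding lprin_UNIV_iff P3_def mem_Collect_eq
    by (elim disjE exE; metis mult.assoc)
qed

lemma P1_if_rprin:
  assumes "y \<in> rprin UNIV x" "x \<in> P1 a" "y \<in> Sa a" shows "y \<in> P1 a"
proof -
  have "x \<in> lprin UNIV (a * x)" using assms(2) by (simp add: P1_iff)
  with assms(1) have "y \<in> lprin UNIV (a * y)" unfolding lprin_UNIV_iff rprin_UNIV_iff
    by (elim disjE exE; metis mult.assoc)
  with assms(3) show ?thesis by (simp add: P1_iff)
qed

lemma Sa_if_lprin: "y \<in> lprin UNIV x \<Longrightarrow> x \<in> Sa a \<Longrightarrow> y \<in> Sa a"
  unfolding lprin_UNIV_iff Sa_iff by (metis mult.assoc)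

lemma gclass_greenL_Sa_P1:
  assumes "x \<in> P1 a"
  shows "gclass greenL (Sa a) x = gclass greenL UNIV x \<inter> P1 a"
proof (rule set_eqI)
  fix y
  have "y \<in> P1 a" if "y \<in> Sa a" "greenL (Sa a) x y"
    using assms P1_if_greenL_Sa[OF greenL_sym[OF that(2)] _ that(1)] by metis
  then show "y \<in> gclass greenL (Sa a) x \<longleftrightarrow> y \<in> gclass greenL UNIV x \<inter> P1 a"
    using assms P1_subset_Sa
    by (auto simp: gclass_iff intro: greenL_UNIV_if_greenL_Sa greenL_Sa_if_P1)
qed

lemma gclass_greenL_Sa_not_P1:
  "x \<in> Sa a \<Longrightarrow> x \<notin> P1 a \<Longrightarrow> gclass greenL (Sa a) x = {x}"
  by (rule gclass_eq_singleton) (auto simp: greenL_refl dest: P1_if_greenL_Sa)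

lemma gclass_greenR_Sa_P3:
  assumes "x \<in> P3 a"
  shows "gclass greenR (Sa a) x = gclass greenR UNIV x \<inter> P3 a"
proof (rule set_eqI)
  fix y
  have "y \<in> P3 a" if "greenR (Sa a) x y"
    using assms P3_if_greenR_Sa[OF greenR_sym[OF that]] by metis
  then show "y \<in> gclass greenR (Sa a) x \<longleftrightarrow> y \<in> gclass greenR UNIV x \<inter> P3 a"
    using assms P3_subset_Sa
    by (auto simp: gclass_iff intro: greenR_UNIV_if_greenR_Sa greenR_Sa_if_P3)
qed

lemma gclass_greenR_Sa_not_P3:
  "x \<in> Sa a \<Longrightarrow> x \<notin> P3 a \<Longrightarrow> gclass greenR (Sa a) x = {x}"
  by (rule gclass_eq_singleton) (auto simp: greenR_refl dest: P3_if_greenR_Sa)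

lemma gclass_greenH_Sa_P1_P3:
  assumes "x \<in> P1 a" "x \<in> P3 a"
  shows "gclass greenH (Sa a) x = gclass greenH UNIV x"
proof -
  have "y \<in> P1 a \<inter> P3 a" if "greenL UNIV x y" "greenR UNIV x y" for y
  proof -
    have "y \<in> Sa a"
      using that(1) assms(1) P1_subset_Sa by (auto simp: greenL_UNIV_iff intro: Sa_if_lprin)
    then show ?thesis using that assms
      by (auto simp: greenL_UNIV_iff greenR_UNIV_iff intro: P1_if_rprin P3_if_lprin)
  qed
  then show ?thesis
    unfolding gclass_greenH gclass_greenL_Sa_P1[OF assms(1)] gclass_greenR_Sa_P3[OF assms(2)]
    by (auto simp: gclass_iff)
qed

lemma gclass_greenH_Sa_not_P1_P3:
  assumes "x \<in> Sa a" "x \<notin> P1 a \<inter> P3 a"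
  shows "gclass greenH (Sa a) x = {x}"
proof -
  have "x \<in> gclass greenL (Sa a) x \<inter> gclass greenR (Sa a) x"
    using assms(1) by (simp add: gclass_iff greenL_refl greenR_refl)
  with assms show ?thesis
    unfolding gclass_greenH by (auto simp: gclass_greenL_Sa_not_P1 gclass_greenR_Sa_not_P3)
qed

lemma greenD_UNIV_if_greenD_Sa:
  assumes "greenD (Sa a) x y" "y \<in> Sa a" "x \<in> P1 a" "x \<in> P3 a"
  shows "greenD UNIV x y \<and> y \<in> P1 a \<and> y \<in> P3 a"
proof -
  from assms(1) obtain z where z: "z \<in> Sa a" and L: "greenL (Sa a) x z"
    and R: "greenR (Sa a) z y" by (auto simp: greenD_def)
  have "z \<in> P1 a" using L assms(3) z by (metis P1_if_greenL_Sa greenL_sym)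
  have "z \<in> P3 a" using greenL_UNIV_if_greenL_Sa[OF L] assms(4)
    by (auto simp: greenL_UNIV_iff intro: P3_if_lprin)
  have "y \<in> P3 a" using R \<open>z \<in> P3 a\<close> by (metis P3_if_greenR_Sa greenR_sym)
  moreover have "y \<in> P1 a" using greenR_UNIV_if_greenR_Sa[OF R] \<open>z \<in> P1 a\<close> assms(2)
    by (auto simp: greenR_UNIV_iff intro: P1_if_rprin)
  ultimately show ?thesis
    using greenL_UNIV_if_greenL_Sa[OF L] greenR_UNIV_if_greenR_Sa[OF R]
    by (auto simp: greenD_def)
qed

lemma greenD_Sa_if_P1_P3:
  assumes "greenD UNIV x y" "x \<in> P1 a" "x \<in> P3 a" "y \<in> P1 a" "y \<in> P3 a"
  shows "greenD (Sa a) x y"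
proof -
  from assms(1) obtain z where L: "greenL UNIV x z" and R: "greenR UNIV z y"
    by (auto simp: greenD_def)
  have "z \<in> Sa a" using L assms(2) P1_subset_Sa
    by (auto simp: greenL_UNIV_iff intro: Sa_if_lprin)
  then have "z \<in> P1 a" using R assms(4) by (auto simp: greenR_UNIV_iff intro: P1_if_rprin)
  have "z \<in> P3 a" using L assms(3) by (auto simp: greenL_UNIV_iff intro: P3_if_lprin)
  have "greenL (Sa a) x z" by (rule greenL_Sa_if_P1[OF L assms(2) \<open>z \<in> P1 a\<close>])
  moreover have "greenR (Sa a) z y" by (rule greenR_Sa_if_P3[OF R \<open>z \<in> P3 a\<close> assms(5)])
  ultimately show ?thesis using \<open>z \<in> Sa a\<close> by (auto simp: greenD_def)
qed

lemma gclass_greenD_Sa_P1_P3: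
  assumes "x \<in> P1 a" "x \<in> P3 a"
  shows "gclass greenD (Sa a) x = gclass greenD UNIV x \<inter> P1 a \<inter> P3 a"
  using assms greenD_UNIV_if_greenD_Sa[of a x] greenD_Sa_if_P1_P3[of x _ a] P1_subset_Sa[of a]
  by (auto simp: gclass_iff)

lemma gclass_greenD_Sa_not_P1:
  assumes "x \<in> Sa a" "x \<notin> P1 a"
  shows "gclass greenD (Sa a) x = gclass greenR (Sa a) x"
proof -
  have "greenD (Sa a) x y \<longleftrightarrow> greenR (Sa a) x y" for y
    using assms greenL_refl[of "Sa a" x] P1_if_greenL_Sa[of a x] by (auto simp: greenD_def)
  then show ?thesis by (simp add: gclass_def)
qed

lemma gclass_greenD_Sa_not_P3:
  assumes "x \<in> Sa a" "x \<notin> P3 a"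
  shows "gclass greenD (Sa a) x = gclass greenL (Sa a) x"
proof -
  have "y = z" if "greenL (Sa a) x z" "greenR (Sa a) z y" for y z
  proof -
    have "z \<notin> P3 a"
      using greenL_UNIV_if_greenL_Sa[OF that(1)] assms(2)
      by (auto simp: greenL_UNIV_iff dest: P3_if_lprin)
    then show ?thesis using that(2) by (metis P3_if_greenR_Sa greenR_sym)
  qed
  then show ?thesis
    using greenR_refl[of "Sa a"] by (fastforce simp: gclass_iff greenD_def)
qed

definition Sa_sandwiched :: "'a::semigroup_mult \<Rightarrow> 'a \<Rightarrow> bool" where
  "Sa_sandwiched a x \<longleftrightarrow> (\<exists>c d. x = c * a * x * d * a)"

lemma P2_P4_iff_Sa_sandwiched:
  assumes "x \<in> Sa a" shows "x \<in> P2 a \<inter> P4 a \<longleftrightarrow> Sa_sandwiched a x"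
proof
  assume "x \<in> P2 a \<inter> P4 a"
  then have "x \<in> jprin UNIV (a * x)" "(\<exists>s. x = x * s * a) \<or> (\<exists>u s. x = u * x * s * a)"
    by (simp_all add: P2_iff P4_def)
  then show "Sa_sandwiched a x" unfolding jprin_UNIV_iff Sa_sandwiched_def
    by (elim disjE exE; metis mult.assoc)
next
  assume "Sa_sandwiched a x"
  then obtain c d where "x = c * a * x * d * a" by (auto simp: Sa_sandwiched_def)
  then have "x = c * (a * x) * (d * a)" "x = (c * a) * x * d * a" by (simp_all add: mult.assoc)
  then have "x \<in> jprin UNIV (a * x)" "x \<in> P4 a" unfolding jprin_UNIV_iff P4_def by blast+
  with assms show "x \<in> P2 a \<inter> P4 a" by (simp add: P2_iff)
qed

lemma greenJ_Sa_cases: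
  "greenJ (Sa a) x y \<Longrightarrow> Sa_sandwiched a x \<or> greenL (Sa a) x y \<or> greenR (Sa a) x y"
  unfolding greenJ_Sa_iff greenL_Sa_iff greenR_Sa_iff Sa_sandwiched_def
    jprin_Sa_iff lprin_Sa_iff rprin_Sa_iff
  by (elim conjE disjE exE; metis mult.assoc)

lemma Sa_sandwiched_if_greenJ_Sa:
  assumes "greenJ (Sa a) x y" "Sa_sandwiched a x" shows "Sa_sandwiched a y"
proof -
  from assms(2) obtain c d where "x = c * a * x * d * a" unfolding Sa_sandwiched_def by blast
  with assms(1) show ?thesis unfolding greenJ_Sa_iff jprin_Sa_iff Sa_sandwiched_def
    by (elim conjE disjE exE; metis mult.assoc)
qed

lemma jprin_Sa_if_Sa_sandwiched:
  assumes "x \<in> jprin UNIV y" "Sa_sandwiched a x" "Sa_sandwiched a y"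
  shows "x \<in> jprin (Sa a) y"
proof -
  from assms(2) obtain c d where "x = c * a * x * d * a" unfolding Sa_sandwiched_def by blast
  moreover from assms(3) obtain c' d' where "y = c' * a * y * d' * a"
    unfolding Sa_sandwiched_def by blast
  ultimately show ?thesis using assms(1) unfolding jprin_Sa_iff jprin_UNIV_iff
    by (elim disjE exE; metis mult.assoc)
qed

lemma greenJ_Sa_iff_Sa_sandwiched:
  assumes "Sa_sandwiched a x"
  shows "greenJ (Sa a) x y \<longleftrightarrow> greenJ UNIV x y \<and> Sa_sandwiched a y"
proof
  assume "greenJ (Sa a) x y"
  then show "greenJ UNIV x y \<and> Sa_sandwiched a y"
    using assms by (simp add: greenJ_UNIV_if_greenJ_Sa Sa_sandwiched_if_greenJ_Sa)
next
  assume "greenJ UNIV x y \<and> Sa_sandwiched a y"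
  then show "greenJ (Sa a) x y"
    using assms by (simp add: greenJ_Sa_iff greenJ_UNIV_iff jprin_Sa_if_Sa_sandwiched)
qed

lemma gclass_greenJ_Sa_P2_P4:
  assumes "x \<in> P2 a \<inter> P4 a"
  shows "gclass greenJ (Sa a) x = gclass greenJ UNIV x \<inter> P2 a \<inter> P4 a"
proof -
  have P2_P4: "y \<in> P2 a \<inter> P4 a \<longleftrightarrow> y \<in> Sa a \<and> Sa_sandwiched a y" for y
    using P2_subset_Sa P2_P4_iff_Sa_sandwiched by blast
  have "Sa_sandwiched a x" using assms P2_P4 by blast
  then have "y \<in> gclass greenJ (Sa a) x \<longleftrightarrow> y \<in> gclass greenJ UNIV x \<and> y \<in> P2 a \<inter> P4 a"
    for y using P2_P4[of y] by (auto simp: gclass_iff greenJ_Sa_iff_Sa_sandwiched)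
  then show ?thesis by blast
qed

lemma gclass_greenJ_Sa_not_P2_P4:
  assumes "x \<in> Sa a" "x \<notin> P2 a \<inter> P4 a"
  shows "gclass greenJ (Sa a) x = gclass greenD (Sa a) x"
proof -
  have "\<not> Sa_sandwiched a x" using assms P2_P4_iff_Sa_sandwiched by blast
  then have "greenJ (Sa a) x y \<longleftrightarrow> greenD (Sa a) x y" if "y \<in> Sa a" for y
    using assms(1) that greenJ_Sa_cases[of a x y] greenJ_if_greenD[OF subsemigroup_Sa]
      greenL_refl[of "Sa a"] greenR_refl[of "Sa a"]
    unfolding greenD_def by blast
  then show ?thesis by (auto simp: gclass_iff)
qed

theorem theorem3p8:
  fixes a x :: "'a::semigroup_mult"
  assumes "x \<in> Sa a"
  shows
   "(x \<in> P1 a \<longrightarrow> gclass greenL (Sa a) x = gclass greenL UNIV x \<inter> P1 a) \<and>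
    (x \<notin> P1 a \<longrightarrow> gclass greenL (Sa a) x = {x}) \<and>
    (x \<in> P3 a \<longrightarrow> gclass greenR (Sa a) x = gclass greenR UNIV x \<inter> P3 a) \<and>
    (x \<notin> P3 a \<longrightarrow> gclass greenR (Sa a) x = {x}) \<and>
    (x \<in> P1 a \<inter> P3 a \<longrightarrow> gclass greenH (Sa a) x = gclass greenH UNIV x) \<and>
    (x \<notin> P1 a \<inter> P3 a \<longrightarrow> gclass greenH (Sa a) x = {x}) \<and>
    (x \<in> P1 a \<inter> P3 a \<longrightarrow>
       gclass greenD (Sa a) x = gclass greenD UNIV x \<inter> P1 a \<inter> P3 a) \<and>
    (x \<notin> P1 a \<longrightarrow> gclass greenD (Sa a) x = gclass greenR (Sa a) x) \<and>
    (x \<notin> P3 a \<longrightarrow> gclass greenD (Sa a) x = gclass greenL (Sa a) x) \<and>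
    (x \<in> P2 a \<inter> P4 a \<longrightarrow>
       gclass greenJ (Sa a) x = gclass greenJ UNIV x \<inter> P2 a \<inter> P4 a) \<and>
    (x \<notin> P2 a \<inter> P4 a \<longrightarrow> gclass greenJ (Sa a) x = gclass greenD (Sa a) x)"
  using assms
  by (intro conjI impI)
    (simp_all add: gclass_greenL_Sa_P1 gclass_greenL_Sa_not_P1 gclass_greenR_Sa_P3
      gclass_greenR_Sa_not_P3 gclass_greenH_Sa_P1_P3 gclass_greenH_Sa_not_P1_P3
      gclass_greenD_Sa_P1_P3 gclass_greenD_Sa_not_P1 gclass_greenD_Sa_not_P3
      gclass_greenJ_Sa_P2_P4 gclass_greenJ_Sa_not_P2_P4)

end
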